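(* Let $(M,\phi,\xi,\eta,g)$ be a $(2n+1)$-dimensional Kenmotsu manifold which has cyclic Ricci tensor, i.e. $(\nabla_XS)(Y,Z)+(\nabla_YS)(Z,X)+(\nabla_ZS)(X,Y)=0$ for all vector fields $X,Y,Z$, and whose metric $g$ is a conformal $\eta$-Einstein soliton, i.e. $$(\mathcal{L}_\xi g)(X,Y)+2S(X,Y)+\Big[2\lambda-r+\Big(p+\frac{2}{2n+1}\Big)\Big]g(X,Y)+2\mu\,\eta(X)\eta(Y)=0$$ for all vector fields $X,Y$ on $M$, where $\lambda,\mu$ are real constants. Then the scalar curvature is $r=\big(p+\frac{2}{2n+1}\big)-4n+2\lambda+2$.
   Context: An almost contact metric manifold $(M,\phi,\xi,\eta,g)$ of dimension $2n+1$ consists of a $(1,1)$-tensor field $\phi$, a vector field $\xi$, a 1-form $\eta$ and a Riemannian metric $g$ with $\phi^2X=-X+\eta(X)\xi$, $\eta(\xi)=1$, $\eta\circ\phi=0$, $\phi\xi=0$, $g(\phi X,\phi Y)=g(X,Y)-\eta(X)\eta(Y)$, $g(X,\xi)=\eta(X)$. It is a Kenmotsu manifold if, with $\nabla$ the Levi-Civita connection of $g$, $(\nabla_X\phi)Y=-g(X,\phi Y)\xi-\eta(Y)\phi X$ and $\nabla_X\xi=X-\eta(X)\xi$ for all vector fields $X,Y$. $S$ denotes the Ricci tensor, $r$ the scalar curvature of $g$, $\mathcal{L}_\xi$ the Lie derivative along $\xi$, and $p$ is a scalar non-dynamical field (a time-dependent scalar field). *)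

theory Defs
  imports "HOL-Analysis.Analysis"
begin

text \<open>Local-coordinate model of a Riemannian manifold: an open set U of real^'n
  (a coordinate chart), points x, vector fields real^'n => real^'n, and tensor fields
  given by their component matrices.\<close>

definition pd :: "'n::finite \<Rightarrow> (real^'n \<Rightarrow> real) \<Rightarrow> real^'n \<Rightarrow> real" where
  "pd k f x = frechet_derivative f (at x) (axis k 1)"

fun iter_pd :: "'n::finite list \<Rightarrow> (real^'n \<Rightarrow> real) \<Rightarrow> real^'n \<Rightarrow> real" where
  "iter_pd [] f = f"
| "iter_pd (k # ks) f = pd k (iter_pd ks f)"

definition smooth_fun :: "(real^'n::finite) set \<Rightarrow> (real^'n \<Rightarrow> real) \<Rightarrow> bool" where
  "smooth_fun U f \<longleftrightarrow> (\<forall>ks. iter_pd ks f differentiable_on U)"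

definition smooth_vf :: "(real^'n::finite) set \<Rightarrow> (real^'n \<Rightarrow> real^'n) \<Rightarrow> bool" where
  "smooth_vf U X \<longleftrightarrow> (\<forall>i. smooth_fun U (\<lambda>x. X x $ i))"

definition smooth_tensor :: "(real^'n::finite) set \<Rightarrow> (real^'n \<Rightarrow> real^'n^'n) \<Rightarrow> bool" where
  "smooth_tensor U A \<longleftrightarrow> (\<forall>i j. smooth_fun U (\<lambda>x. A x $ i $ j))"

definition dder :: "(real^'n::finite \<Rightarrow> real^'n) \<Rightarrow> (real^'n \<Rightarrow> real) \<Rightarrow> real^'n \<Rightarrow> real" where
  "dder X f x = (\<Sum>i\<in>UNIV. X x $ i * pd i f x)"

definition E :: "'n::finite \<Rightarrow> real^'n \<Rightarrow> real^'n" where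
  "E k = (\<lambda>x. axis k 1)"

definition gval :: "(real^'n::finite \<Rightarrow> real^'n^'n) \<Rightarrow> real^'n \<Rightarrow> real^'n \<Rightarrow> real^'n \<Rightarrow> real" where
  "gval g x u v = (\<Sum>i\<in>UNIV. \<Sum>j\<in>UNIV. g x $ i $ j * u $ i * v $ j)"

definition riemannian_metric :: "(real^'n::finite) set \<Rightarrow> (real^'n \<Rightarrow> real^'n^'n) \<Rightarrow> bool" where
  "riemannian_metric U g \<longleftrightarrow> smooth_tensor U g \<and>
     (\<forall>x\<in>U. \<forall>i j. g x $ i $ j = g x $ j $ i) \<and>
     (\<forall>x\<in>U. \<forall>u. u \<noteq> 0 \<longrightarrow> gval g x u u > 0)"

definition christoffel :: "(real^'n::finite \<Rightarrow> real^'n^'n) \<Rightarrow> 'n \<Rightarrow> 'n \<Rightarrow> 'n \<Rightarrow> real^'n \<Rightarrow> real" where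
  "christoffel g k i j x = (1/2) * (\<Sum>l\<in>UNIV. matrix_inv (g x) $ k $ l *
      (pd i (\<lambda>y. g y $ j $ l) x + pd j (\<lambda>y. g y $ i $ l) x - pd l (\<lambda>y. g y $ i $ j) x))"

definition nabla :: "(real^'n::finite \<Rightarrow> real^'n^'n) \<Rightarrow> (real^'n \<Rightarrow> real^'n) \<Rightarrow> (real^'n \<Rightarrow> real^'n) \<Rightarrow> real^'n \<Rightarrow> real^'n" where
  "nabla g X Y x = (\<chi> k. dder X (\<lambda>y. Y y $ k) x
      + (\<Sum>i\<in>UNIV. \<Sum>j\<in>UNIV. christoffel g k i j x * X x $ i * Y x $ j))"

definition lie :: "(real^'n::finite \<Rightarrow> real^'n) \<Rightarrow> (real^'n \<Rightarrow> real^'n) \<Rightarrow> real^'n \<Rightarrow> real^'n" where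
  "lie X Y x = (\<chi> k. dder X (\<lambda>y. Y y $ k) x - dder Y (\<lambda>y. X y $ k) x)"

definition curv :: "(real^'n::finite \<Rightarrow> real^'n^'n) \<Rightarrow> (real^'n \<Rightarrow> real^'n) \<Rightarrow> (real^'n \<Rightarrow> real^'n) \<Rightarrow> (real^'n \<Rightarrow> real^'n) \<Rightarrow> real^'n \<Rightarrow> real^'n" where
  "curv g X Y Z x = nabla g X (nabla g Y Z) x - nabla g Y (nabla g X Z) x - nabla g (lie X Y) Z x"

definition ricci :: "(real^'n::finite \<Rightarrow> real^'n^'n) \<Rightarrow> (real^'n \<Rightarrow> real^'n) \<Rightarrow> (real^'n \<Rightarrow> real^'n) \<Rightarrow> real^'n \<Rightarrow> real" where
  "ricci g Y Z x = (\<Sum>k\<in>UNIV. curv g (E k) Y Z x $ k)"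

definition scal :: "(real^'n::finite \<Rightarrow> real^'n^'n) \<Rightarrow> real^'n \<Rightarrow> real" where
  "scal g x = (\<Sum>i\<in>UNIV. \<Sum>j\<in>UNIV. matrix_inv (g x) $ i $ j * ricci g (E i) (E j) x)"

definition nabla_ricci :: "(real^'n::finite \<Rightarrow> real^'n^'n) \<Rightarrow> (real^'n \<Rightarrow> real^'n) \<Rightarrow> (real^'n \<Rightarrow> real^'n) \<Rightarrow> (real^'n \<Rightarrow> real^'n) \<Rightarrow> real^'n \<Rightarrow> real" where
  "nabla_ricci g X Y Z x = dder X (ricci g Y Z) x - ricci g (nabla g X Y) Z x - ricci g Y (nabla g X Z) x"

definition lie_g :: "(real^'n::finite \<Rightarrow> real^'n^'n) \<Rightarrow> (real^'n \<Rightarrow> real^'n) \<Rightarrow> (real^'n \<Rightarrow> real^'n) \<Rightarrow> (real^'n \<Rightarrow> real^'n) \<Rightarrow> real^'n \<Rightarrow> real" where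
  "lie_g g V X Y x = dder V (\<lambda>y. gval g y (X y) (Y y)) x
      - gval g x (lie V X x) (Y x) - gval g x (X x) (lie V Y x)"

text \<open>Almost contact metric structure (phi, xi, eta, g) on U; phi acts by phi x *v u,
  eta is given by a covector field: eta(u) = eta x \<bullet> u.\<close>
definition almost_contact_metric ::
  "(real^'n::finite) set \<Rightarrow> (real^'n \<Rightarrow> real^'n^'n) \<Rightarrow> (real^'n \<Rightarrow> real^'n) \<Rightarrow> (real^'n \<Rightarrow> real^'n) \<Rightarrow> (real^'n \<Rightarrow> real^'n^'n) \<Rightarrow> bool" where
  "almost_contact_metric U phi xi eta g \<longleftrightarrow>
     riemannian_metric U g \<and> smooth_tensor U phi \<and> smooth_vf U xi \<and> smooth_vf U eta \<and>
     (\<forall>x\<in>U.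
        (\<forall>u. phi x *v (phi x *v u) = - u + (eta x \<bullet> u) *\<^sub>R xi x) \<and>
        eta x \<bullet> xi x = 1 \<and>
        (\<forall>u. eta x \<bullet> (phi x *v u) = 0) \<and>
        phi x *v xi x = 0 \<and>
        (\<forall>u v. gval g x (phi x *v u) (phi x *v v) = gval g x u v - (eta x \<bullet> u) * (eta x \<bullet> v)) \<and>
        (\<forall>u. gval g x u (xi x) = eta x \<bullet> u))"

definition kenmotsu ::
  "(real^'n::finite) set \<Rightarrow> (real^'n \<Rightarrow> real^'n^'n) \<Rightarrow> (real^'n \<Rightarrow> real^'n) \<Rightarrow> (real^'n \<Rightarrow> real^'n) \<Rightarrow> (real^'n \<Rightarrow> real^'n^'n) \<Rightarrow> bool" where
  "kenmotsu U phi xi eta g \<longleftrightarrow> almost_contact_metric U phi xi eta g \<and>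
     (\<forall>X Y. smooth_vf U X \<longrightarrow> smooth_vf U Y \<longrightarrow> (\<forall>x\<in>U.
        nabla g X (\<lambda>y. phi y *v Y y) x - phi x *v nabla g X Y x
          = - (gval g x (X x) (phi x *v Y x)) *\<^sub>R xi x - (eta x \<bullet> Y x) *\<^sub>R (phi x *v X x))) \<and>
     (\<forall>X. smooth_vf U X \<longrightarrow> (\<forall>x\<in>U. nabla g X xi x = X x - (eta x \<bullet> X x) *\<^sub>R xi x))"

definition cyclic_ricci :: "(real^'n::finite) set \<Rightarrow> (real^'n \<Rightarrow> real^'n^'n) \<Rightarrow> bool" where
  "cyclic_ricci U g \<longleftrightarrow> (\<forall>X Y Z. smooth_vf U X \<longrightarrow> smooth_vf U Y \<longrightarrow> smooth_vf U Z \<longrightarrow>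
     (\<forall>x\<in>U. nabla_ricci g X Y Z x + nabla_ricci g Y Z X x + nabla_ricci g Z X Y x = 0))"

definition conformal_eta_einstein_soliton ::
  "(real^'n::finite) set \<Rightarrow> nat \<Rightarrow> (real^'n \<Rightarrow> real^'n) \<Rightarrow> (real^'n \<Rightarrow> real^'n) \<Rightarrow> (real^'n \<Rightarrow> real^'n^'n)
   \<Rightarrow> real \<Rightarrow> real \<Rightarrow> (real^'n \<Rightarrow> real) \<Rightarrow> bool" where
  "conformal_eta_einstein_soliton U n xi eta g lam mu p \<longleftrightarrow>
     (\<forall>X Y. smooth_vf U X \<longrightarrow> smooth_vf U Y \<longrightarrow> (\<forall>x\<in>U.
        lie_g g xi X Y x + 2 * ricci g X Y x
        + (2 * lam - scal g x + (p x + 2 / (2 * real n + 1))) * gval g x (X x) (Y x)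
        + 2 * mu * (eta x \<bullet> X x) * (eta x \<bullet> Y x) = 0))"

end

(* On a Kenmotsu manifold \<nabla>\<xi> = I - \<eta> \<otimes> \<xi>. This gives L_\<xi> g = 2 (g - \<eta> \<otimes> \<eta>) and
   R(X,Y)\<xi> = \<eta>(X) Y - \<eta>(Y) X, hence S(\<xi>,\<xi>) = -2n. Evaluating the soliton equation at (\<xi>,\<xi>)
   fixes its scalar term, 2\<lambda> - r + p + 2/(2n+1) = 4n - 2\<mu>, and then the soliton equation says
   that M is \<eta>-Einstein: S = -(2n+1-\<mu>) g + (1-\<mu>) \<eta> \<otimes> \<eta>. Differentiating,
   (\<nabla>_X S)(Y,Z) = (1-\<mu>) ((g(X,Y) - \<eta>(X)\<eta>(Y)) \<eta>(Z) + \<eta>(Y) (g(X,Z) - \<eta>(X)\<eta>(Z))), and the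
   cyclic condition on (\<xi>, w, w) with \<eta>(w) = 0 forces \<mu> = 1, which gives the value of r.
   The soliton equation is assumed only for smooth fields, so applying it to \<nabla>_X Y needs the
   Christoffel symbols, and hence the inverse metric, to be smooth. *)

theory Submission
  imports Defs
begin

section \<open>Partial derivatives\<close>

lemma has_derivative_pd: "(f has_derivative f') (at x) \<Longrightarrow> pd k f x = f' (axis k 1)"
  unfolding pd_def using frechet_derivative_at by metis

lemma pd_cong_open:
  assumes "open U" "x \<in> U" "\<And>y. y \<in> U \<Longrightarrow> f y = h y"
  shows "pd k f x = pd k h x"
proof -
  have "(f has_derivative D) (at x) \<longleftrightarrow> (h has_derivative D) (at x)" for D
    using has_derivative_transform_within_open[where f=f and g=h and s=U and x=x and t=UNIV]
       has_derivative_transform_within_open[where f=h and g=f and s=U and x=x and t=UNIV] assms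
    by auto
  then show ?thesis unfolding pd_def frechet_derivative_def by simp
qed

lemma differentiable_on_cong_open:
  assumes "open U" "\<And>y. y \<in> U \<Longrightarrow> f y = h y" "f differentiable_on U"
  shows "h differentiable_on U"
proof -
  have "h differentiable (at y)" if "y \<in> U" for y
    using assms that has_derivative_transform_within_open[where f=f and g=h and s=U and x=y and t=UNIV]
    unfolding differentiable_def differentiable_on_eq_differentiable_at[OF assms(1)] by blast
  then show ?thesis using assms(1) by (simp add: differentiable_on_eq_differentiable_at)
qed

lemma pd_const [simp]: "pd k (\<lambda>y. c) x = 0"
  unfolding pd_def by simp

lemma pd_add:
  assumes "f differentiable (at x)" "h differentiable (at x)"
  shows "pd k (\<lambda>y. f y + h y) x = pd k f x + pd k h x"
  using has_derivative_pd[OF has_derivative_add[OF assms[unfolded frechet_derivative_works]]]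
    assms[unfolded frechet_derivative_works, THEN has_derivative_pd] by simp

lemma pd_diff:
  assumes "f differentiable (at x)" "h differentiable (at x)"
  shows "pd k (\<lambda>y. f y - h y) x = pd k f x - pd k h x"
  using has_derivative_pd[OF has_derivative_diff[OF assms[unfolded frechet_derivative_works]]]
    assms[unfolded frechet_derivative_works, THEN has_derivative_pd] by simp

lemma pd_mult:
  assumes "f differentiable (at x)" "h differentiable (at x)"
  shows "pd k (\<lambda>y. f y * h y) x = pd k f x * h x + f x * pd k h x"
  using has_derivative_pd[OF has_derivative_mult[OF assms[unfolded frechet_derivative_works]]]
    assms[unfolded frechet_derivative_works, THEN has_derivative_pd] by simp

lemma pd_inverse:
  assumes "h differentiable (at x)" "h x \<noteq> 0"
  shows "pd k (\<lambda>y. 1 / h y) x = - pd k h x / (h x * h x)"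
  using has_derivative_pd[OF Deriv.has_derivative_inverse[OF assms(2) assms(1)[unfolded frechet_derivative_works]]]
    assms(1)[unfolded frechet_derivative_works, THEN has_derivative_pd] assms(2)
  by (simp add: inverse_eq_divide)

lemma pd_sum:
  assumes "finite I" "\<And>i. i \<in> I \<Longrightarrow> f i differentiable (at x)"
  shows "pd k (\<lambda>y. \<Sum>i\<in>I. f i y) x = (\<Sum>i\<in>I. pd k (f i) x)"
  using assms
proof (induction I rule: finite_induct)
  case (insert a I)
  then have "(\<lambda>y. \<Sum>i\<in>I. f i y) differentiable (at x)"
    by (intro differentiable_sum) auto
  with insert show ?case by (simp add: pd_add)
qed simp

lemma sum_axis_mult: "(\<Sum>i\<in>UNIV. axis a (1::real) $ i * f i) = f a"
proof -
  have "(\<Sum>i\<in>UNIV. axis a (1::real) $ i * f i) = (\<Sum>i\<in>UNIV. if i = a then f i else 0)"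
    by (intro sum.cong) (auto simp: axis_def)
  then show ?thesis by simp
qed

lemma dder_E: "dder (E k) f x = pd k f x"
  unfolding dder_def E_def by (rule sum_axis_mult)

lemma dder_cong_open:
  assumes "open U" "x \<in> U" "\<And>y. y \<in> U \<Longrightarrow> f y = h y"
  shows "dder X f x = dder X h x"
  unfolding dder_def using pd_cong_open[OF assms] by simp

lemma dder_const [simp]: "dder X (\<lambda>y. c) x = 0"
  unfolding dder_def by simp

lemma dder_add:
  "f differentiable (at x) \<Longrightarrow> h differentiable (at x) \<Longrightarrow>
    dder X (\<lambda>y. f y + h y) x = dder X f x + dder X h x"
  unfolding dder_def by (simp add: pd_add distrib_left sum.distrib)

lemma dder_diff:
  "f differentiable (at x) \<Longrightarrow> h differentiable (at x) \<Longrightarrow>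
    dder X (\<lambda>y. f y - h y) x = dder X f x - dder X h x"
  unfolding dder_def by (simp add: pd_diff right_diff_distrib sum_subtractf)

lemma dder_mult:
  "f differentiable (at x) \<Longrightarrow> h differentiable (at x) \<Longrightarrow>
    dder X (\<lambda>y. f y * h y) x = dder X f x * h x + f x * dder X h x"
  unfolding dder_def
  by (simp add: pd_mult distrib_left sum.distrib sum_distrib_right sum_distrib_left mult_ac)

lemma dder_cmult: "f differentiable (at x) \<Longrightarrow> dder X (\<lambda>y. c * f y) x = c * dder X f x"
  using dder_mult[OF differentiable_const] by simp

section \<open>Smooth functions\<close>

fun Ck :: "nat \<Rightarrow> (real^'n::finite) set \<Rightarrow> (real^'n \<Rightarrow> real) \<Rightarrow> bool" where
  "Ck 0 U f \<longleftrightarrow> f differentiable_on U"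
| "Ck (Suc m) U f \<longleftrightarrow> f differentiable_on U \<and> (\<forall>k. Ck m U (pd k f))"

lemma iter_pd_append: "iter_pd (ks @ [k]) f = iter_pd ks (pd k f)"
  by (induction ks) auto

lemma Ck_iff: "Ck m U f \<longleftrightarrow> (\<forall>ks. length ks \<le> m \<longrightarrow> iter_pd ks f differentiable_on U)"
proof (induction m arbitrary: f)
  case (Suc m)
  have "(\<forall>ks. length ks \<le> Suc m \<longrightarrow> iter_pd ks f differentiable_on U) \<longleftrightarrow>
      f differentiable_on U \<and> (\<forall>k ks. length ks \<le> m \<longrightarrow> iter_pd (ks @ [k]) f differentiable_on U)"
    by (metis (no_types, opaque_lifting) iter_pd.simps(1) length_append_singleton le0 not_less_eq_eq
        rev_exhaust list.size(3))
  then show ?case using Suc.IH by (simp add: iter_pd_append)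
qed simp

lemma smooth_fun_iff_Ck: "smooth_fun U f \<longleftrightarrow> (\<forall>m. Ck m U f)"
  unfolding smooth_fun_def Ck_iff by (metis le_refl)

lemma Ck_differentiable_on: "Ck m U f \<Longrightarrow> f differentiable_on U"
  by (cases m) auto

lemma Ck_differentiable_at: "open U \<Longrightarrow> Ck m U f \<Longrightarrow> y \<in> U \<Longrightarrow> f differentiable (at y)"
  using Ck_differentiable_on differentiable_on_eq_differentiable_at by blast

lemma Ck_Suc_imp_Ck: "Ck (Suc m) U f \<Longrightarrow> Ck m U f"
  by (induction m arbitrary: f) auto

lemma Ck_cong_open:
  assumes "open U" "\<And>y. y \<in> U \<Longrightarrow> f y = h y" "Ck m U f"
  shows "Ck m U h"
  using assms(2,3)
proof (induction m arbitrary: f h)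
  case 0 then show ?case using differentiable_on_cong_open[OF assms(1)] by auto
next
  case (Suc m)
  from Suc.prems(2) have f: "f differentiable_on U" "Ck m U (pd k f)" for k by simp_all
  have "Ck m U (pd k h)" for k
    by (rule Suc.IH[OF _ f(2)]) (rule pd_cong_open[OF assms(1) _ Suc.prems(1)])
  with differentiable_on_cong_open[OF assms(1) Suc.prems(1) f(1)] show ?case by simp
qed

lemma Ck_SucI:
  assumes "open U" "f differentiable_on U" "\<And>k. Ck m U (h k)"
    and "\<And>k y. y \<in> U \<Longrightarrow> h k y = pd k f y"
  shows "Ck (Suc m) U f"
  using assms(2) Ck_cong_open[OF assms(1) assms(4) assms(3)] by simp

lemma Ck_const: "Ck m U (\<lambda>y. c)"
  by (induction m arbitrary: c) (simp_all add: pd_const[abs_def])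

lemma Ck_add:
  assumes "open U" "Ck m U f" "Ck m U h"
  shows "Ck m U (\<lambda>y. f y + h y)"
  using assms(2,3)
proof (induction m arbitrary: f h)
  case 0 then show ?case by (auto intro: differentiable_on_add)
next
  case (Suc m)
  show ?case
  proof (rule Ck_SucI[OF assms(1)])
    show "(\<lambda>y. f y + h y) differentiable_on U"
      using Suc.prems by (auto intro: differentiable_on_add)
    show "Ck m U (\<lambda>y. pd k f y + pd k h y)" for k
      using Suc by simp
    show "pd k f y + pd k h y = pd k (\<lambda>y. f y + h y) y" if "y \<in> U" for k y
      using pd_add[OF Suc.prems[THEN Ck_differentiable_at[OF assms(1) _ that]]] by simp
  qed
qed

lemma Ck_mult:
  assumes "open U" "Ck m U f" "Ck m U h"
  shows "Ck m U (\<lambda>y. f y * h y)"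
  using assms(2,3)
proof (induction m arbitrary: f h)
  case 0 then show ?case by (auto intro: differentiable_on_mult)
next
  case (Suc m)
  show ?case
  proof (rule Ck_SucI[OF assms(1)])
    show "(\<lambda>y. f y * h y) differentiable_on U"
      using Suc.prems by (auto intro: differentiable_on_mult)
    show "Ck m U (\<lambda>y. pd k f y * h y + f y * pd k h y)" for k
      using Suc Suc.prems[THEN Ck_Suc_imp_Ck] by (auto intro: Ck_add[OF assms(1)])
    show "pd k f y * h y + f y * pd k h y = pd k (\<lambda>y. f y * h y) y" if "y \<in> U" for k y
      using pd_mult[OF Suc.prems[THEN Ck_differentiable_at[OF assms(1) _ that]]] by simp
  qed
qed

lemma Ck_inverse:
  assumes "open U" "Ck m U h" "\<And>y. y \<in> U \<Longrightarrow> h y \<noteq> 0"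
  shows "Ck m U (\<lambda>y. 1 / h y)"
  using assms(2)
proof (induction m)
  case 0
  then show ?case using differentiable_on_inverse[of h U] assms(3) by (simp add: inverse_eq_divide)
next
  case (Suc m)
  have IH: "Ck m U (\<lambda>y. 1 / h y)" using Suc Ck_Suc_imp_Ck by blast
  have dh: "Ck m U (pd k h)" for k using Suc.prems by simp
  show ?case
  proof (rule Ck_SucI[OF assms(1)])
    show "(\<lambda>y. 1 / h y) differentiable_on U"
      using differentiable_on_inverse[OF Ck_differentiable_on[OF Suc.prems] assms(3)]
      by (simp add: inverse_eq_divide)
    show "Ck m U (\<lambda>y. (-1 * pd k h y) * (1 / h y * (1 / h y)))" for k
      by (rule Ck_mult[OF assms(1) Ck_mult[OF assms(1) Ck_const dh] Ck_mult[OF assms(1) IH IH]])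
    show "(-1 * pd k h y) * (1 / h y * (1 / h y)) = pd k (\<lambda>y. 1 / h y) y" if "y \<in> U" for k y
      using pd_inverse[OF Ck_differentiable_at[OF assms(1) Suc.prems that] assms(3)[OF that]]
      by simp
  qed
qed

lemma Ck_sum:
  assumes "open U" "finite I" "\<And>i. i \<in> I \<Longrightarrow> Ck m U (f i)"
  shows "Ck m U (\<lambda>y. \<Sum>i\<in>I. f i y)"
  using assms(2,3) by (induction I rule: finite_induct) (auto intro: Ck_const Ck_add[OF assms(1)])

lemma Ck_prod:
  assumes "open U" "finite I" "\<And>i. i \<in> I \<Longrightarrow> Ck m U (f i)"
  shows "Ck m U (\<lambda>y. \<Prod>i\<in>I. f i y)"
  using assms(2,3) by (induction I rule: finite_induct) (auto intro: Ck_const Ck_mult[OF assms(1)])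

lemma smooth_fun_const: "smooth_fun U (\<lambda>y. c)"
  unfolding smooth_fun_iff_Ck using Ck_const by blast

lemma smooth_fun_add: "open U \<Longrightarrow> smooth_fun U f \<Longrightarrow> smooth_fun U h \<Longrightarrow> smooth_fun U (\<lambda>y. f y + h y)"
  unfolding smooth_fun_iff_Ck using Ck_add by blast

lemma smooth_fun_mult: "open U \<Longrightarrow> smooth_fun U f \<Longrightarrow> smooth_fun U h \<Longrightarrow> smooth_fun U (\<lambda>y. f y * h y)"
  unfolding smooth_fun_iff_Ck using Ck_mult by blast

lemma smooth_fun_diff:
  assumes "open U" "smooth_fun U f" "smooth_fun U h"
  shows "smooth_fun U (\<lambda>y. f y - h y)"
proof -
  have "smooth_fun U (\<lambda>y. f y + (-1) * h y)"
    by (intro smooth_fun_add smooth_fun_mult smooth_fun_const assms)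
  then show ?thesis by simp
qed

lemma smooth_fun_divide:
  "open U \<Longrightarrow> smooth_fun U f \<Longrightarrow> smooth_fun U h \<Longrightarrow> (\<And>y. y \<in> U \<Longrightarrow> h y \<noteq> 0) \<Longrightarrow>
    smooth_fun U (\<lambda>y. f y / h y)"
  unfolding smooth_fun_iff_Ck using Ck_mult[OF _ _ Ck_inverse] by fastforce

lemma smooth_fun_sum:
  "open U \<Longrightarrow> finite I \<Longrightarrow> (\<And>i. i \<in> I \<Longrightarrow> smooth_fun U (f i)) \<Longrightarrow>
    smooth_fun U (\<lambda>y. \<Sum>i\<in>I. f i y)"
  unfolding smooth_fun_iff_Ck using Ck_sum by blast

lemma smooth_fun_prod:
  "open U \<Longrightarrow> finite I \<Longrightarrow> (\<And>i. i \<in> I \<Longrightarrow> smooth_fun U (f i)) \<Longrightarrow>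
    smooth_fun U (\<lambda>y. \<Prod>i\<in>I. f i y)"
  unfolding smooth_fun_iff_Ck using Ck_prod by blast

lemma smooth_fun_pd: "smooth_fun U f \<Longrightarrow> smooth_fun U (pd k f)"
  unfolding smooth_fun_iff_Ck by (metis Ck.simps(2))

lemma smooth_fun_cong_open:
  "open U \<Longrightarrow> (\<And>y. y \<in> U \<Longrightarrow> f y = h y) \<Longrightarrow> smooth_fun U f \<Longrightarrow> smooth_fun U h"
  unfolding smooth_fun_iff_Ck using Ck_cong_open by blast

lemma smooth_fun_differentiable:
  "open U \<Longrightarrow> smooth_fun U f \<Longrightarrow> y \<in> U \<Longrightarrow> f differentiable (at y)"
  unfolding smooth_fun_iff_Ck using Ck_differentiable_at by blast

lemma smooth_fun_det:
  assumes "open U" "\<And>i j. smooth_fun U (\<lambda>y. M y $ i $ j)"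
  shows "smooth_fun U (\<lambda>y. det (M y :: real^'n::finite^'n))"
  unfolding det_def
  by (intro smooth_fun_sum[OF assms(1)] smooth_fun_mult[OF assms(1)] smooth_fun_const
      smooth_fun_prod[OF assms(1)] assms(2) finite_permutations finite)

lemma smooth_vf_component: "smooth_vf U X \<Longrightarrow> smooth_fun U (\<lambda>x. X x $ i)"
  unfolding smooth_vf_def by blast

lemma smooth_vf_differentiable:
  "open U \<Longrightarrow> smooth_vf U X \<Longrightarrow> x \<in> U \<Longrightarrow> (\<lambda>y. X y $ i) differentiable (at x)"
  using smooth_fun_differentiable smooth_vf_component by blast

lemma smooth_vf_const: "smooth_vf U (\<lambda>y. w)"
  unfolding smooth_vf_def using smooth_fun_const by blast

lemma smooth_fun_inner:
  "open U \<Longrightarrow> smooth_vf U Y \<Longrightarrow> smooth_vf U Z \<Longrightarrow> smooth_fun U (\<lambda>y. Y y \<bullet> Z y)"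
  unfolding inner_vec_def inner_real_def
  by (intro smooth_fun_sum smooth_fun_mult smooth_vf_component finite)

lemma dder_smooth: "open U \<Longrightarrow> smooth_vf U X \<Longrightarrow> smooth_fun U f \<Longrightarrow> smooth_fun U (dder X f)"
  unfolding dder_def[abs_def]
  by (intro smooth_fun_sum smooth_fun_mult smooth_vf_component smooth_fun_pd finite)

section \<open>The metric and its inverse\<close>

lemma gval_eq_inner: "gval g x u v = u \<bullet> (g x *v v)"
  unfolding gval_def inner_vec_def matrix_vector_mult_def inner_real_def
  by (simp add: sum_distrib_left mult_ac)

lemma gval_eq_inner': "gval g x u v = (u v* g x) \<bullet> v"
  by (simp add: gval_eq_inner dot_lmul_matrix)

lemma gval_add_left: "gval g x (u + v) w = gval g x u w + gval g x v w"
  by (simp add: gval_eq_inner inner_add_left)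

lemma gval_diff_left: "gval g x (u - v) w = gval g x u w - gval g x v w"
  by (simp add: gval_eq_inner inner_diff_left)

lemma gval_scaleR_left: "gval g x (c *\<^sub>R u) w = c * gval g x u w"
  by (simp add: gval_eq_inner)

lemma gval_sum_left: "gval g x (\<Sum>a\<in>A. u a) w = (\<Sum>a\<in>A. gval g x (u a) w)"
  by (simp add: gval_eq_inner inner_sum_left)

lemma gval_add_right: "gval g x w (u + v) = gval g x w u + gval g x w v"
  by (simp add: gval_eq_inner' inner_add_right)

lemma gval_diff_right: "gval g x w (u - v) = gval g x w u - gval g x w v"
  by (simp add: gval_eq_inner' inner_diff_right)

lemma gval_scaleR_right: "gval g x w (c *\<^sub>R u) = c * gval g x w u"
  by (simp add: gval_eq_inner')

lemma gval_sum_right: "gval g x w (\<Sum>a\<in>A. u a) = (\<Sum>a\<in>A. gval g x w (u a))"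
  by (simp add: gval_eq_inner' inner_sum_right)

lemma gval_matrix_right: "gval g x u (A *v v) = gval (\<lambda>_. g x ** A) x u v"
  by (simp add: gval_eq_inner matrix_vector_mul_assoc)

lemma gval_transpose: "gval (\<lambda>_. transpose M) x u v = gval (\<lambda>_. M) x v u"
  unfolding gval_eq_inner transpose_matrix_vector inner_commute[of u] dot_lmul_matrix ..

lemma gval_matrix_add: "gval (\<lambda>_. A + B) x u v = gval (\<lambda>_. A) x u v + gval (\<lambda>_. B) x u v"
  by (simp add: gval_eq_inner matrix_vector_mult_add_rdistrib inner_add_right)

lemma metric_sym: "riemannian_metric U g \<Longrightarrow> x \<in> U \<Longrightarrow> g x $ i $ j = g x $ j $ i"
  unfolding riemannian_metric_def by blast

lemma metric_smooth: "riemannian_metric U g \<Longrightarrow> smooth_fun U (\<lambda>y. g y $ i $ j)"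
  unfolding riemannian_metric_def smooth_tensor_def by blast

lemma smooth_fun_gval:
  assumes "open U" "riemannian_metric U g" "smooth_vf U Y" "smooth_vf U Z"
  shows "smooth_fun U (\<lambda>y. gval g y (Y y) (Z y))"
  unfolding gval_def
  by (intro smooth_fun_sum smooth_fun_mult finite assms(1) metric_smooth[OF assms(2)]
      smooth_vf_component[OF assms(3)] smooth_vf_component[OF assms(4)])

lemma gval_sym:
  assumes "riemannian_metric U g" "x \<in> U"
  shows "gval g x u v = gval g x v u"
proof -
  have "transpose (g x) = g x"
    using metric_sym[OF assms] by (simp add: transpose_def vec_eq_iff)
  then have "u v* g x = g x *v u"
    by (metis transpose_matrix_vector)
  then show ?thesis
    using gval_eq_inner'[of g x u v] gval_eq_inner[of g x v u] by (simp add: inner_commute)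
qed

lemma metric_invertible:
  assumes "riemannian_metric U g" "x \<in> U"
  shows "invertible (g x)"
proof -
  have "u = 0" if "g x *v u = 0" for u
    using that assms unfolding riemannian_metric_def gval_eq_inner by force
  then show ?thesis unfolding invertible_left_inverse matrix_left_invertible_ker by blast
qed

lemma matrix_mul_matrix_inv:
  fixes A :: "real^'n::finite^'n"
  assumes "invertible A"
  shows "A ** matrix_inv A = mat 1"
  using someI_ex[OF assms[unfolded invertible_def]] unfolding matrix_inv_def by auto

lemma matrix_inv_cramer:
  fixes A :: "real^'n::finite^'n"
  assumes "invertible A"
  shows "matrix_inv A $ i $ j = det (\<chi> a b. if b = i then axis j 1 $ a else A $ a $ b) / det A"
proof -
  have "A *v (matrix_inv A *v axis j 1) = axis j 1"
    by (simp add: matrix_vector_mul_assoc matrix_mul_matrix_inv[OF assms])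
  then have "matrix_inv A *v axis j 1 = (\<chi> k. det (\<chi> a b. if b = k then axis j 1 $ a else A $ a $ b) / det A)"
    using cramer[of A] assms invertible_det_nz by blast
  moreover have "(matrix_inv A *v axis j 1) $ i = matrix_inv A $ i $ j"
    by (simp add: matrix_vector_mult_def axis_def if_distrib cong: if_cong)
  ultimately show ?thesis by simp
qed

lemma smooth_fun_matrix_inv:
  assumes "open U" "riemannian_metric U g"
  shows "smooth_fun U (\<lambda>y. matrix_inv (g y) $ i $ j)"
proof (rule smooth_fun_cong_open[OF assms(1) _ smooth_fun_divide[OF assms(1)]])
  have "smooth_fun U (\<lambda>y. if b = i then axis j 1 $ a else g y $ a $ b)" for a b
    by (cases "b = i") (simp_all add: smooth_fun_const metric_smooth[OF assms(2)])
  then show "smooth_fun U (\<lambda>y. det (\<chi> a b. if b = i then axis j 1 $ a else g y $ a $ b))"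
    by (intro smooth_fun_det[OF assms(1)]) simp
  show "smooth_fun U (\<lambda>y. det (g y))"
    by (rule smooth_fun_det[OF assms(1) metric_smooth[OF assms(2)]])
  show "det (g y) \<noteq> 0" if "y \<in> U" for y
    using metric_invertible[OF assms(2) that] invertible_det_nz by blast
  show "det (\<chi> a b. if b = i then axis j 1 $ a else g y $ a $ b) / det (g y) = matrix_inv (g y) $ i $ j"
    if "y \<in> U" for y
    by (simp add: matrix_inv_cramer[OF metric_invertible[OF assms(2) that]])
qed

section \<open>The Levi-Civita connection\<close>

definition christoffel_matrix :: "(real^'n::finite \<Rightarrow> real^'n^'n) \<Rightarrow> 'n \<Rightarrow> real^'n \<Rightarrow> real^'n^'n" where
  "christoffel_matrix g a x = (\<chi> k b. christoffel g k a b x)"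

lemma pd_metric_sym:
  "open U \<Longrightarrow> riemannian_metric U g \<Longrightarrow> x \<in> U \<Longrightarrow>
    pd a (\<lambda>y. g y $ i $ j) x = pd a (\<lambda>y. g y $ j $ i) x"
  by (rule pd_cong_open) (auto intro: metric_sym)

lemma christoffel_sym:
  assumes "open U" "riemannian_metric U g" "x \<in> U"
  shows "christoffel g k i j x = christoffel g k j i x"
  unfolding christoffel_def using pd_metric_sym[OF assms, of _ i j] by (simp add: add.commute)

lemma christoffel_smooth:
  assumes "open U" "riemannian_metric U g"
  shows "smooth_fun U (christoffel g k i j)"
  unfolding christoffel_def[abs_def]
  by (intro smooth_fun_mult[OF assms(1)] smooth_fun_const smooth_fun_sum[OF assms(1)]
      smooth_fun_add[OF assms(1)] smooth_fun_diff[OF assms(1)] smooth_fun_pd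
      metric_smooth[OF assms(2)] smooth_fun_matrix_inv[OF assms] finite)

lemma metric_mult_christoffel_matrix:
  assumes "riemannian_metric U g" "x \<in> U"
  shows "g x ** christoffel_matrix g a x = (1/2) *\<^sub>R (\<chi> l b.
    pd a (\<lambda>y. g y $ b $ l) x + pd b (\<lambda>y. g y $ a $ l) x - pd l (\<lambda>y. g y $ a $ b) x)"
proof -
  have "christoffel_matrix g a x = (1/2) *\<^sub>R (matrix_inv (g x) ** (\<chi> l b.
      pd a (\<lambda>y. g y $ b $ l) x + pd b (\<lambda>y. g y $ a $ l) x - pd l (\<lambda>y. g y $ a $ b) x))"
    unfolding christoffel_matrix_def christoffel_def by (simp add: vec_eq_iff matrix_matrix_mult_def)
  then show ?thesis
    by (simp add: matrix_scalar_ac scalar_matrix_assoc[symmetric] matrix_mul_assoc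
        matrix_mul_matrix_inv[OF metric_invertible[OF assms]])
qed

text \<open>In index notation \<open>\<partial>\<^sub>a g\<^sub>i\<^sub>j = \<Gamma>\<^sub>i\<^sub>a\<^sub>j + \<Gamma>\<^sub>j\<^sub>a\<^sub>i\<close>, with the lowered symbols
  \<open>\<Gamma>\<^sub>l\<^sub>a\<^sub>b = g\<^sub>l\<^sub>m \<Gamma>\<^sup>m\<^sub>a\<^sub>b\<close>: metric compatibility of \<open>\<nabla>\<close> in coordinates.\<close>
lemma pd_metric_eq_christoffel:
  assumes "open U" "riemannian_metric U g" "x \<in> U"
  shows "(\<chi> i j. pd a (\<lambda>y. g y $ i $ j) x)
    = g x ** christoffel_matrix g a x + transpose (g x ** christoffel_matrix g a x)"
  unfolding metric_mult_christoffel_matrix[OF assms(2,3)]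
  using pd_metric_sym[OF assms] by (simp add: vec_eq_iff transpose_def field_simps)

lemma nabla_coordinate:
  "nabla g (E a) Y x = (\<chi> k. pd a (\<lambda>y. Y y $ k) x) + christoffel_matrix g a x *v Y x"
proof -
  have "(\<Sum>i\<in>UNIV. \<Sum>j\<in>UNIV. christoffel g k i j x * axis a 1 $ i * Y x $ j)
      = (\<Sum>j\<in>UNIV. christoffel g k a j x * Y x $ j)" for k
    using sum_axis_mult[of a "\<lambda>i. \<Sum>j\<in>UNIV. christoffel g k i j x * Y x $ j"]
    by (simp add: sum_distrib_left mult_ac)
  then show ?thesis
    unfolding nabla_def dder_E christoffel_matrix_def matrix_vector_mult_def
    by (simp add: vec_eq_iff E_def)
qed

lemma nabla_eq_sum_coordinate: "nabla g X Y x = (\<Sum>a\<in>UNIV. X x $ a *\<^sub>R nabla g (E a) Y x)"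
  unfolding nabla_coordinate
  by (simp add: vec_eq_iff nabla_def dder_def matrix_vector_mult_def christoffel_matrix_def
      distrib_left sum.distrib sum_distrib_left mult_ac)

lemma pd_gval:
  assumes dg: "\<And>i j. (\<lambda>y. g y $ i $ j) differentiable (at x)"
    and dY: "\<And>i. (\<lambda>y. Y y $ i) differentiable (at x)"
    and dZ: "\<And>j. (\<lambda>y. Z y $ j) differentiable (at x)"
  shows "pd a (\<lambda>y. gval g y (Y y) (Z y)) x
    = gval (\<lambda>_. \<chi> i j. pd a (\<lambda>y. g y $ i $ j) x) x (Y x) (Z x)
      + gval g x (\<chi> i. pd a (\<lambda>y. Y y $ i) x) (Z x) + gval g x (Y x) (\<chi> j. pd a (\<lambda>y. Z y $ j) x)"
proof -
  have dgY: "(\<lambda>y. g y $ i $ j * Y y $ i) differentiable (at x)" for i j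
    using dg dY by (rule differentiable_mult)
  have "pd a (\<lambda>y. gval g y (Y y) (Z y)) x
      = (\<Sum>i\<in>UNIV. \<Sum>j\<in>UNIV. pd a (\<lambda>y. g y $ i $ j * Y y $ i * Z y $ j) x)"
    unfolding gval_def using dgY dZ
    by (simp add: pd_sum differentiable_sum differentiable_mult)
  also have "\<dots> = (\<Sum>i\<in>UNIV. \<Sum>j\<in>UNIV. pd a (\<lambda>y. g y $ i $ j) x * Y x $ i * Z x $ j
      + g x $ i $ j * pd a (\<lambda>y. Y y $ i) x * Z x $ j + g x $ i $ j * Y x $ i * pd a (\<lambda>y. Z y $ j) x)"
    using pd_mult[OF dgY dZ] pd_mult[OF dg dY] by (simp add: algebra_simps)
  finally show ?thesis by (simp add: gval_def sum.distrib)
qed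

lemma pd_gval_eq_nabla:
  assumes U: "open U" and g: "riemannian_metric U g" and x: "x \<in> U"
    and dY: "\<And>i. (\<lambda>y. Y y $ i) differentiable (at x)"
    and dZ: "\<And>j. (\<lambda>y. Z y $ j) differentiable (at x)"
  shows "pd a (\<lambda>y. gval g y (Y y) (Z y)) x
    = gval g x (nabla g (E a) Y x) (Z x) + gval g x (Y x) (nabla g (E a) Z x)"
proof -
  let ?C = "christoffel_matrix g a x"
  have "gval (\<lambda>_. \<chi> i j. pd a (\<lambda>y. g y $ i $ j) x) x (Y x) (Z x)
      = gval g x (?C *v Y x) (Z x) + gval g x (Y x) (?C *v Z x)"
    unfolding pd_metric_eq_christoffel[OF U g x] gval_matrix_add gval_transpose
      gval_matrix_right[symmetric] gval_sym[OF g x, of "Z x"] by simp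
  then show ?thesis
    unfolding pd_gval[OF smooth_fun_differentiable[OF U metric_smooth[OF g] x] dY dZ]
      nabla_coordinate gval_add_left gval_add_right by simp
qed

lemma metric_compatible:
  assumes "open U" "riemannian_metric U g" "x \<in> U"
    and "\<And>i. (\<lambda>y. Y y $ i) differentiable (at x)"
    and "\<And>j. (\<lambda>y. Z y $ j) differentiable (at x)"
  shows "dder X (\<lambda>y. gval g y (Y y) (Z y)) x
    = gval g x (nabla g X Y x) (Z x) + gval g x (Y x) (nabla g X Z x)"
  unfolding dder_def pd_gval_eq_nabla[OF assms] nabla_eq_sum_coordinate[of g X Y]
    nabla_eq_sum_coordinate[of g X Z]
  by (simp add: gval_sum_left gval_sum_right gval_scaleR_left gval_scaleR_right distrib_left
      sum.distrib)

lemma torsion_free: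
  assumes "open U" "riemannian_metric U g" "x \<in> U"
  shows "nabla g X Y x - nabla g Y X x = lie X Y x"
proof -
  have "(\<Sum>a\<in>UNIV. \<Sum>b\<in>UNIV. christoffel g k a b x * Y x $ a * X x $ b)
      = (\<Sum>a\<in>UNIV. \<Sum>b\<in>UNIV. christoffel g k a b x * X x $ a * Y x $ b)" for k
  proof -
    have "(\<Sum>a\<in>UNIV. \<Sum>b\<in>UNIV. christoffel g k a b x * Y x $ a * X x $ b)
      = (\<Sum>b\<in>UNIV. \<Sum>a\<in>UNIV. christoffel g k a b x * Y x $ a * X x $ b)"
      by (rule sum.swap)
    also have "\<dots> = (\<Sum>a\<in>UNIV. \<Sum>b\<in>UNIV. christoffel g k a b x * X x $ a * Y x $ b)"
    proof (intro sum.cong refl)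
      fix a b
      show "christoffel g k b a x * Y x $ b * X x $ a = christoffel g k a b x * X x $ a * Y x $ b"
        using christoffel_sym[OF assms, of k b a] by simp
    qed
    finally show ?thesis .
  qed
  then show ?thesis unfolding nabla_def lie_def by (simp add: vec_eq_iff)
qed

lemma nabla_at_point: "nabla g X Y x = nabla g (\<lambda>_. X x) Y x"
  unfolding nabla_def dder_def by simp

lemma nabla_cong_open:
  assumes "open U" "x \<in> U" "\<And>y. y \<in> U \<Longrightarrow> Y y = Y' y"
  shows "nabla g X Y x = nabla g X Y' x"
proof -
  have "dder X (\<lambda>y. Y y $ k) x = dder X (\<lambda>y. Y' y $ k) x" for k
    using assms by (intro dder_cong_open) auto
  then show ?thesis unfolding nabla_def using assms(2,3) by simp
qed

lemma nabla_diff_right: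
  assumes "\<And>i. (\<lambda>y. V y $ i) differentiable (at x)" "\<And>i. (\<lambda>y. W y $ i) differentiable (at x)"
  shows "nabla g X (\<lambda>y. V y - W y) x = nabla g X V x - nabla g X W x"
  unfolding nabla_def by (simp add: vec_eq_iff dder_diff[OF assms] right_diff_distrib sum_subtractf)

lemma nabla_scaleR_right:
  assumes "f differentiable (at x)" "\<And>i. (\<lambda>y. W y $ i) differentiable (at x)"
  shows "nabla g X (\<lambda>y. f y *\<^sub>R W y) x = dder X f x *\<^sub>R W x + f x *\<^sub>R nabla g X W x"
  unfolding nabla_def
  by (simp add: vec_eq_iff dder_mult[OF assms] distrib_left sum.distrib sum_distrib_left mult_ac)

lemma nabla_smooth:
  assumes "open U" "riemannian_metric U g" "smooth_vf U X" "smooth_vf U Y"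
  shows "smooth_vf U (nabla g X Y)"
  unfolding smooth_vf_def nabla_def vec_lambda_beta
  by (intro allI smooth_fun_add[OF assms(1)] dder_smooth[OF assms(1,3)]
      smooth_vf_component[OF assms(4)] smooth_fun_sum[OF assms(1)] smooth_fun_mult[OF assms(1)]
      christoffel_smooth[OF assms(1,2)] smooth_vf_component[OF assms(3)] finite)

section \<open>Kenmotsu manifolds\<close>

lemma kenmotsu_metric: "kenmotsu U phi xi eta g \<Longrightarrow> riemannian_metric U g"
  unfolding kenmotsu_def almost_contact_metric_def by blast

lemma kenmotsu_smooth_xi: "kenmotsu U phi xi eta g \<Longrightarrow> smooth_vf U xi"
  unfolding kenmotsu_def almost_contact_metric_def by blast

lemma kenmotsu_smooth_eta: "kenmotsu U phi xi eta g \<Longrightarrow> smooth_vf U eta"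
  unfolding kenmotsu_def almost_contact_metric_def by blast

lemma kenmotsu_eta_xi: "kenmotsu U phi xi eta g \<Longrightarrow> x \<in> U \<Longrightarrow> eta x \<bullet> xi x = 1"
  unfolding kenmotsu_def almost_contact_metric_def by blast

lemma kenmotsu_gval_xi: "kenmotsu U phi xi eta g \<Longrightarrow> x \<in> U \<Longrightarrow> gval g x u (xi x) = eta x \<bullet> u"
  unfolding kenmotsu_def almost_contact_metric_def by blast

text \<open>The defining identity for \<open>\<nabla>\<xi>\<close> is only assumed for smooth fields, but \<open>\<nabla>\<^sub>Y\<xi>\<close> at
  \<open>x\<close> depends on \<open>Y x\<close> alone, so it holds for every \<open>Y\<close>.\<close>
lemma kenmotsu_nabla_xi:
  assumes "kenmotsu U phi xi eta g" "x \<in> U"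
  shows "nabla g Y xi x = Y x - (eta x \<bullet> Y x) *\<^sub>R xi x"
  using assms smooth_vf_const[of U "Y x"] nabla_at_point[of g Y xi x]
  unfolding kenmotsu_def by auto

lemma kenmotsu_dder_eta:
  assumes U: "open U" and K: "kenmotsu U phi xi eta g" and x: "x \<in> U"
    and dY: "\<And>i. (\<lambda>y. Y y $ i) differentiable (at x)"
  shows "dder X (\<lambda>y. eta y \<bullet> Y y) x
    = eta x \<bullet> nabla g X Y x + gval g x (X x) (Y x) - (eta x \<bullet> X x) * (eta x \<bullet> Y x)"
proof -
  note g = kenmotsu_metric[OF K]
  have "dder X (\<lambda>y. eta y \<bullet> Y y) x = dder X (\<lambda>y. gval g y (Y y) (xi y)) x"
    using kenmotsu_gval_xi[OF K] by (intro dder_cong_open[OF U x]) simp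
  also have "\<dots> = gval g x (nabla g X Y x) (xi x) + gval g x (Y x) (nabla g X xi x)"
    by (rule metric_compatible[OF U g x dY smooth_vf_differentiable[OF U kenmotsu_smooth_xi[OF K] x]])
  also have "\<dots> = eta x \<bullet> nabla g X Y x + gval g x (X x) (Y x) - (eta x \<bullet> X x) * (eta x \<bullet> Y x)"
    unfolding kenmotsu_nabla_xi[OF K x] gval_diff_right gval_scaleR_right kenmotsu_gval_xi[OF K x]
    using gval_sym[OF g x, of "Y x" "X x"] by simp
  finally show ?thesis .
qed

lemma kenmotsu_nabla_nabla_xi:
  assumes U: "open U" and K: "kenmotsu U phi xi eta g" and x: "x \<in> U" and Y: "smooth_vf U Y"
  shows "nabla g X (nabla g Y xi) x = nabla g X Y x
    - (eta x \<bullet> nabla g X Y x + gval g x (X x) (Y x) - (eta x \<bullet> X x) * (eta x \<bullet> Y x)) *\<^sub>R xi x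
    - (eta x \<bullet> Y x) *\<^sub>R (X x - (eta x \<bullet> X x) *\<^sub>R xi x)"
proof -
  have dY: "(\<lambda>y. Y y $ i) differentiable (at x)" for i
    by (rule smooth_vf_differentiable[OF U Y x])
  have dxi: "(\<lambda>y. xi y $ i) differentiable (at x)" for i
    by (rule smooth_vf_differentiable[OF U kenmotsu_smooth_xi[OF K] x])
  have deY: "(\<lambda>y. eta y \<bullet> Y y) differentiable (at x)"
    by (rule smooth_fun_differentiable[OF U smooth_fun_inner[OF U kenmotsu_smooth_eta[OF K] Y] x])
  have "nabla g X (nabla g Y xi) x = nabla g X (\<lambda>y. Y y - (eta y \<bullet> Y y) *\<^sub>R xi y) x"
    using kenmotsu_nabla_xi[OF K] by (intro nabla_cong_open[OF U x]) auto
  also have "\<dots> = nabla g X Y x - nabla g X (\<lambda>y. (eta y \<bullet> Y y) *\<^sub>R xi y) x"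
    using differentiable_mult[OF deY dxi] by (intro nabla_diff_right dY) simp
  also have "nabla g X (\<lambda>y. (eta y \<bullet> Y y) *\<^sub>R xi y) x
      = dder X (\<lambda>y. eta y \<bullet> Y y) x *\<^sub>R xi x + (eta x \<bullet> Y x) *\<^sub>R nabla g X xi x"
    by (rule nabla_scaleR_right[OF deY dxi])
  finally show ?thesis
    unfolding kenmotsu_dder_eta[OF U K x dY] kenmotsu_nabla_xi[OF K x] by (simp add: algebra_simps)
qed

lemma kenmotsu_curvature_xi:
  assumes U: "open U" and K: "kenmotsu U phi xi eta g" and x: "x \<in> U"
    and X: "smooth_vf U X" and Y: "smooth_vf U Y"
  shows "curv g X Y xi x = (eta x \<bullet> X x) *\<^sub>R Y x - (eta x \<bullet> Y x) *\<^sub>R X x"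
proof -
  note g = kenmotsu_metric[OF K]
  have "nabla g (lie X Y) xi x
      = (nabla g X Y x - nabla g Y X x) - (eta x \<bullet> (nabla g X Y x - nabla g Y X x)) *\<^sub>R xi x"
    unfolding kenmotsu_nabla_xi[OF K x] torsion_free[OF U g x, symmetric] ..
  then show ?thesis
    unfolding curv_def kenmotsu_nabla_nabla_xi[OF U K x X] kenmotsu_nabla_nabla_xi[OF U K x Y]
      gval_sym[OF g x, of "Y x"]
    by (simp add: algebra_simps inner_diff_right)
qed

lemma kenmotsu_ricci_xi:
  fixes xi eta :: "real^'n::finite \<Rightarrow> real^'n"
  assumes U: "open U" and K: "kenmotsu U phi xi eta g" and x: "x \<in> U" and Y: "smooth_vf U Y"
  shows "ricci g Y xi x = (1 - real CARD('n)) * (eta x \<bullet> Y x)"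
proof -
  have "curv g (E k) Y xi x $ k = eta x $ k * Y x $ k - eta x \<bullet> Y x" for k
    using kenmotsu_curvature_xi[OF U K x _ Y, of "E k"]
    by (simp add: E_def smooth_vf_const inner_axis)
  then have "ricci g Y xi x = (\<Sum>k\<in>UNIV. eta x $ k * Y x $ k) - real CARD('n) * (eta x \<bullet> Y x)"
    unfolding ricci_def by (simp add: sum_subtractf)
  also have "(\<Sum>k\<in>UNIV. eta x $ k * Y x $ k) = eta x \<bullet> Y x"
    by (simp add: inner_vec_def)
  finally show ?thesis by (simp add: algebra_simps)
qed

lemma kenmotsu_lie_g_xi:
  assumes U: "open U" and K: "kenmotsu U phi xi eta g" and x: "x \<in> U"
    and dY: "\<And>i. (\<lambda>y. Y y $ i) differentiable (at x)"
    and dZ: "\<And>i. (\<lambda>y. Z y $ i) differentiable (at x)"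
  shows "lie_g g xi Y Z x = 2 * gval g x (Y x) (Z x) - 2 * (eta x \<bullet> Y x) * (eta x \<bullet> Z x)"
proof -
  note g = kenmotsu_metric[OF K]
  have "gval g x (xi x) (Z x) = eta x \<bullet> Z x"
    using gval_sym[OF g x] kenmotsu_gval_xi[OF K x] by metis
  then show ?thesis
    unfolding lie_g_def metric_compatible[OF U g x dY dZ] torsion_free[OF U g x, symmetric]
      gval_diff_left gval_diff_right kenmotsu_nabla_xi[OF K x] gval_scaleR_left gval_scaleR_right
      kenmotsu_gval_xi[OF K x]
    by simp
qed

section \<open>Conformal \<open>\<eta>\<close>-Einstein solitons on Kenmotsu manifolds\<close>

lemma soliton_scalar_term:
  fixes xi eta :: "real^'n::finite \<Rightarrow> real^'n"
  assumes U: "open U" and K: "kenmotsu U phi xi eta g" and x: "x \<in> U"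
    and S: "conformal_eta_einstein_soliton U n xi eta g lam mu p"
    and N: "CARD('n) = 2 * n + 1"
  shows "2 * lam - scal g x + (p x + 2 / (2 * real n + 1)) = 4 * real n - 2 * mu"
proof -
  note xi = kenmotsu_smooth_xi[OF K] and eta_xi = kenmotsu_eta_xi[OF K x]
  note dxi = smooth_vf_differentiable[OF U xi x]
  have "lie_g g xi xi xi x + 2 * ricci g xi xi x
      + (2 * lam - scal g x + (p x + 2 / (2 * real n + 1))) * gval g x (xi x) (xi x)
      + 2 * mu * (eta x \<bullet> xi x) * (eta x \<bullet> xi x) = 0"
    using S xi x unfolding conformal_eta_einstein_soliton_def by blast
  moreover have "gval g x (xi x) (xi x) = 1"
    using kenmotsu_gval_xi[OF K x] eta_xi by simp
  moreover have "lie_g g xi xi xi x = 0"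
    using kenmotsu_lie_g_xi[OF U K x dxi dxi] kenmotsu_gval_xi[OF K x] eta_xi by simp
  moreover have "ricci g xi xi x = - 2 * real n"
    using kenmotsu_ricci_xi[OF U K x xi] eta_xi N by simp
  ultimately show ?thesis using eta_xi by simp
qed

lemma soliton_eta_einstein:
  fixes xi eta :: "real^'n::finite \<Rightarrow> real^'n"
  assumes U: "open U" and K: "kenmotsu U phi xi eta g" and x: "x \<in> U"
    and S: "conformal_eta_einstein_soliton U n xi eta g lam mu p"
    and N: "CARD('n) = 2 * n + 1"
    and Y: "smooth_vf U Y" and Z: "smooth_vf U Z"
  shows "ricci g Y Z x
    = - (1 + 2 * real n - mu) * gval g x (Y x) (Z x) + (1 - mu) * (eta x \<bullet> Y x) * (eta x \<bullet> Z x)"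
proof -
  have "lie_g g xi Y Z x + 2 * ricci g Y Z x
      + (2 * lam - scal g x + (p x + 2 / (2 * real n + 1))) * gval g x (Y x) (Z x)
      + 2 * mu * (eta x \<bullet> Y x) * (eta x \<bullet> Z x) = 0"
    using S Y Z x unfolding conformal_eta_einstein_soliton_def by blast
  then show ?thesis
    unfolding soliton_scalar_term[OF U K x S N] kenmotsu_lie_g_xi[OF U K x
        smooth_vf_differentiable[OF U Y x] smooth_vf_differentiable[OF U Z x]]
    by (simp add: algebra_simps)
qed

lemma soliton_nabla_ricci:
  fixes xi eta :: "real^'n::finite \<Rightarrow> real^'n"
  assumes U: "open U" and K: "kenmotsu U phi xi eta g" and x: "x \<in> U"
    and S: "conformal_eta_einstein_soliton U n xi eta g lam mu p"
    and N: "CARD('n) = 2 * n + 1"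
    and X: "smooth_vf U X" and Y: "smooth_vf U Y" and Z: "smooth_vf U Z"
  shows "nabla_ricci g X Y Z x = (1 - mu) *
    ((gval g x (X x) (Y x) - (eta x \<bullet> X x) * (eta x \<bullet> Y x)) * (eta x \<bullet> Z x)
      + (eta x \<bullet> Y x) * (gval g x (X x) (Z x) - (eta x \<bullet> X x) * (eta x \<bullet> Z x)))"
proof -
  note g = kenmotsu_metric[OF K] and eta = kenmotsu_smooth_eta[OF K]
  define A where "A = - (1 + 2 * real n - mu)"
  define B where "B = 1 - mu"
  have dY: "\<And>i. (\<lambda>y. Y y $ i) differentiable (at x)" and dZ: "\<And>i. (\<lambda>y. Z y $ i) differentiable (at x)"
    using smooth_vf_differentiable[OF U _ x] Y Z by blast+
  have dg: "(\<lambda>y. gval g y (Y y) (Z y)) differentiable (at x)"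
    by (rule smooth_fun_differentiable[OF U smooth_fun_gval[OF U g Y Z] x])
  have deY: "(\<lambda>y. eta y \<bullet> Y y) differentiable (at x)"
    by (rule smooth_fun_differentiable[OF U smooth_fun_inner[OF U eta Y] x])
  have deZ: "(\<lambda>y. eta y \<bullet> Z y) differentiable (at x)"
    by (rule smooth_fun_differentiable[OF U smooth_fun_inner[OF U eta Z] x])
  have "dder X (ricci g Y Z) x
      = dder X (\<lambda>y. A * gval g y (Y y) (Z y) + B * ((eta y \<bullet> Y y) * (eta y \<bullet> Z y))) x"
    using soliton_eta_einstein[OF U K _ S N Y Z] unfolding A_def B_def
    by (intro dder_cong_open[OF U x]) (simp add: algebra_simps)
  also have "\<dots> = A * dder X (\<lambda>y. gval g y (Y y) (Z y)) x
      + B * (dder X (\<lambda>y. eta y \<bullet> Y y) x * (eta x \<bullet> Z x) + (eta x \<bullet> Y x) * dder X (\<lambda>y. eta y \<bullet> Z y) x)"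
    using dg deY deZ
    by (simp add: dder_add dder_cmult dder_mult differentiable_mult differentiable_const)
  finally have "dder X (ricci g Y Z) x
      = A * (gval g x (nabla g X Y x) (Z x) + gval g x (Y x) (nabla g X Z x))
      + B * ((eta x \<bullet> nabla g X Y x + gval g x (X x) (Y x) - (eta x \<bullet> X x) * (eta x \<bullet> Y x)) * (eta x \<bullet> Z x)
        + (eta x \<bullet> Y x) * (eta x \<bullet> nabla g X Z x + gval g x (X x) (Z x) - (eta x \<bullet> X x) * (eta x \<bullet> Z x)))"
    unfolding metric_compatible[OF U g x dY dZ] kenmotsu_dder_eta[OF U K x dY]
      kenmotsu_dder_eta[OF U K x dZ] .
  moreover have "ricci g (nabla g X Y) Z x
      = A * gval g x (nabla g X Y x) (Z x) + B * (eta x \<bullet> nabla g X Y x) * (eta x \<bullet> Z x)"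
    unfolding A_def B_def by (rule soliton_eta_einstein[OF U K x S N nabla_smooth[OF U g X Y] Z])
  moreover have "ricci g Y (nabla g X Z) x
      = A * gval g x (Y x) (nabla g X Z x) + B * (eta x \<bullet> Y x) * (eta x \<bullet> nabla g X Z x)"
    unfolding A_def B_def by (rule soliton_eta_einstein[OF U K x S N Y nabla_smooth[OF U g X Z]])
  ultimately show ?thesis
    unfolding nabla_ricci_def B_def[symmetric] by (simp add: algebra_simps)
qed

text \<open>Evaluate the cyclic condition on \<open>(\<xi>, w, w)\<close> for a constant field \<open>w \<noteq> 0\<close> with
  \<open>\<eta>(w) = 0\<close>: the left-hand side becomes \<open>2 (1 - \<mu>) g(w, w)\<close>.\<close>
lemma cyclic_soliton_mu_eq_1:
  fixes xi eta :: "real^'n::finite \<Rightarrow> real^'n"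
  assumes n: "n \<ge> 1" and N: "CARD('n) = 2 * n + 1"
    and U: "open U" and K: "kenmotsu U phi xi eta g" and C: "cyclic_ricci U g"
    and S: "conformal_eta_einstein_soliton U n xi eta g lam mu p" and x: "x \<in> U"
  shows "mu = 1"
proof -
  note g = kenmotsu_metric[OF K] and xi = kenmotsu_smooth_xi[OF K]
  have eta_xi: "eta x \<bullet> xi x = 1" by (rule kenmotsu_eta_xi[OF K x])
  have "2 \<le> DIM(real^'n)" using N n by simp
  then obtain w where "w \<noteq> 0" and w: "eta x \<bullet> w = 0"
    using orthogonal_to_vector_exists[of "eta x"] unfolding orthogonal_def by blast
  then have "gval g x w w > 0"
    using g x unfolding riemannian_metric_def by blast
  have W: "smooth_vf U (\<lambda>_. w)" by (rule smooth_vf_const)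
  have "nabla_ricci g xi (\<lambda>_. w) (\<lambda>_. w) x + nabla_ricci g (\<lambda>_. w) (\<lambda>_. w) xi x
      + nabla_ricci g (\<lambda>_. w) xi (\<lambda>_. w) x = 0"
    using C xi W x unfolding cyclic_ricci_def by blast
  moreover have "gval g x w (xi x) = 0" "gval g x (xi x) w = 0"
    using kenmotsu_gval_xi[OF K x] gval_sym[OF g x] w by metis+
  ultimately have "2 * (1 - mu) * gval g x w w = 0"
    unfolding soliton_nabla_ricci[OF U K x S N xi W W] soliton_nabla_ricci[OF U K x S N W W xi]
      soliton_nabla_ricci[OF U K x S N W xi W]
    using eta_xi w by (simp add: algebra_simps)
  with \<open>gval g x w w > 0\<close> show ?thesis by simp
qed

theorem corollary3p5:
  fixes U :: "(real^'n::finite) set"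
    and n :: nat
    and phi :: "real^'n \<Rightarrow> real^'n^'n"
    and xi eta :: "real^'n \<Rightarrow> real^'n"
    and g :: "real^'n \<Rightarrow> real^'n^'n"
    and lam mu :: real
    and p :: "real^'n \<Rightarrow> real"
  assumes "n \<ge> 1" and "CARD('n) = 2 * n + 1"
    and "open U"
    and "kenmotsu U phi xi eta g"
    and "cyclic_ricci U g"
    and "conformal_eta_einstein_soliton U n xi eta g lam mu p"
  shows "\<forall>x\<in>U. scal g x = (p x + 2 / (2 * real n + 1)) - 4 * real n + 2 * lam + 2"
proof
  fix x assume x: "x \<in> U"
  have "mu = 1" by (rule cyclic_soliton_mu_eq_1[OF assms x])
  with soliton_scalar_term[OF assms(3,4) x assms(6,2)]
  show "scal g x = (p x + 2 / (2 * real n + 1)) - 4 * real n + 2 * lam + 2" by simp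
qed

end
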